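(* Let $\varphi\in\mathcal{S}_e$ and set $h_e:=-\frac12\mathcal{F}^{-1}\varphi$ (which also lies in $\mathcal{S}_e$). Then for all $\mathbf{w}\in\mathbb{R}^d$, $$\varphi(\mathbf{w})-\varphi(\mathbf 0)=\int_{\mathbb{R}^d}h_e(\mathbf{x})\int_{\mathbb{R}}e^{-ik}\big(|\mathbf{w}\cdot\mathbf{x}|-|k|\big)^+dk\,d\mathbf{x}.$$
   Context: $\mathcal{S}(\mathbb{R}^d)$ is the Schwartz space; $\mathcal{S}_e$ is the space of even functions in $\mathcal{S}(\mathbb{R}^d)$. Inverse Fourier transform: $\mathcal{F}^{-1}f(\mathbf{x})=(2\pi)^{-d}\int_{\mathbb{R}^d}f(\mathbf{w})e^{i\mathbf{x}\cdot\mathbf{w}}d\mathbf{w}$. *)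

theory Defs
  imports "HOL-Analysis.Analysis"
begin

fun iter_pd :: "'a::euclidean_space list \<Rightarrow> ('a \<Rightarrow> complex) \<Rightarrow> 'a \<Rightarrow> complex" where
  "iter_pd [] f = f"
| "iter_pd (b # bs) f = (\<lambda>x. frechet_derivative (iter_pd bs f) (at x) b)"

definition schwartz :: "('a::euclidean_space \<Rightarrow> complex) \<Rightarrow> bool" where
  "schwartz f \<longleftrightarrow>
     (\<forall>bs. set bs \<subseteq> Basis \<longrightarrow> (\<forall>x. iter_pd bs f differentiable (at x))) \<and>
     (\<forall>bs (n::nat). set bs \<subseteq> Basis \<longrightarrow>
        (\<exists>C. \<forall>x. (1 + norm x) ^ n * norm (iter_pd bs f x) \<le> C))"

definition schwartz_even :: "('a::euclidean_space \<Rightarrow> complex) \<Rightarrow> bool" where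
  "schwartz_even f \<longleftrightarrow> schwartz f \<and> (\<forall>x. f (- x) = f x)"

definition inv_fourier :: "('a::euclidean_space \<Rightarrow> complex) \<Rightarrow> 'a \<Rightarrow> complex" where
  "inv_fourier f x = complex_of_real ((2 * pi) powi (- int DIM('a))) *
     integral\<^sup>L lborel (\<lambda>w. f w * cis (x \<bullet> w))"

end

theory Submission
  imports Defs "HOL-Probability.Characteristic_Functions" "HOL-Probability.Sinc_Integral"
begin

text \<open>
  The inner integral is elementary: \<open>\<integral> exp(-ik) (a - |k|)\<^sup>+ dk = 2 - 2 cos a\<close>. With
  \<open>F\<phi>(x) = \<integral> \<phi>(y) exp(i x\<cdot>y) dy\<close> the right-hand side is therefore
  \<open>-(2\<pi>)\<^sup>-\<^sup>d \<integral> F\<phi>(x) (1 - cos (w\<cdot>x)) dx\<close>; splitting the cosine into two exponentials,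
  the inversion formula \<open>\<integral> F\<phi>(x) exp(-i w\<cdot>x) dx = (2\<pi>)\<^sup>d \<phi>(w)\<close> and the evenness of
  \<open>\<phi>\<close> turn this into \<open>\<phi>(w) - \<phi>(0)\<close>.

  Inversion is proved by Gaussian regularisation. By Fubini and the self-duality of the
  Gaussian, inserting the factor \<open>exp(-\<epsilon>\<^sup>2|x|\<^sup>2/2)\<close> turns the left-hand side into
  \<open>(2\<pi>)\<^sup>d\<^sup>/\<^sup>2 \<integral> \<phi>(w + \<epsilon>z) exp(-|z|\<^sup>2/2) dz\<close>, and \<open>\<epsilon> \<rightarrow> 0\<close> is dominated convergence on
  both sides. On the left this needs \<open>F\<phi>\<close> to be integrable: by integration by parts
  \<open>(\<Prod>b\<in>S. (x\<cdot>b)\<^sup>2) F\<phi>(x)\<close> is, up to sign, the transform of a derivative of \<open>\<phi>\<close>, hence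
  bounded, and so \<open>|F\<phi>(x)| \<le> K \<Prod>b. 1 / (1 + (x\<cdot>b)\<^sup>2)\<close>.
\<close>

section \<open>Lebesgue integrals on euclidean spaces\<close>

lemma
  fixes g :: "'a::euclidean_space \<Rightarrow> real \<Rightarrow> 'b::{real_normed_field,banach,second_countable_topology}"
  assumes int: "\<And>b. b \<in> Basis \<Longrightarrow> integrable lborel (g b)"
  shows integrable_prod_Basis: "integrable lborel (\<lambda>x::'a. \<Prod>b\<in>Basis. g b (x \<bullet> b))"
    and integral_prod_Basis:
      "(\<integral>x. (\<Prod>b\<in>Basis. g b (x \<bullet> b)) \<partial>(lborel::'a measure)) = (\<Prod>b\<in>Basis. integral\<^sup>L lborel (g b))"
proof -
  interpret product_sigma_finite "\<lambda>_::'a. lborel :: real measure" by unfold_locales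
  have [measurable]: "(\<lambda>f. \<Sum>b\<in>Basis. f b *\<^sub>R b) \<in> (\<Pi>\<^sub>M b\<in>Basis. lborel) \<rightarrow>\<^sub>M (borel :: 'a measure)"
    by measurable
  have g_meas: "b \<in> Basis \<Longrightarrow> g b \<in> borel_measurable borel" for b
    using borel_measurable_integrable[OF int, of b] by simp
  have meas: "(\<lambda>x::'a. \<Prod>b\<in>Basis. g b (x \<bullet> b)) \<in> borel_measurable borel"
    by (intro borel_measurable_prod measurable_compose[OF _ g_meas]) auto
  have coords: "(\<lambda>f. \<Prod>b\<in>Basis. g b ((\<Sum>c\<in>Basis. f c *\<^sub>R c) \<bullet> b)) = (\<lambda>f. \<Prod>b\<in>Basis. g b (f b))"
    by (intro ext prod.cong refl) (simp add: inner_sum_left inner_Basis if_distrib sum.delta cong: if_cong)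
  have "integrable (\<Pi>\<^sub>M b\<in>Basis. lborel) (\<lambda>f. \<Prod>b\<in>Basis. g b (f b))"
    by (rule product_integrable_prod) (auto intro: int)
  then show "integrable lborel (\<lambda>x::'a. \<Prod>b\<in>Basis. g b (x \<bullet> b))"
    by (subst lborel_eq, subst integrable_distr_eq[OF _ meas]) (simp_all add: coords)
  show "(\<integral>x. (\<Prod>b\<in>Basis. g b (x \<bullet> b)) \<partial>(lborel::'a measure)) = (\<Prod>b\<in>Basis. integral\<^sup>L lborel (g b))"
    using product_integral_prod[of Basis g] int
    by (subst lborel_eq, subst integral_distr[OF _ meas]) (simp_all add: coords)
qed

lemma
  fixes f :: "'a::euclidean_space \<Rightarrow> 'b::{banach,second_countable_topology}"
  assumes c: "c \<noteq> 0" and [measurable]: "f \<in> borel_measurable borel"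
  shows integrable_lborel_affine_iff: "integrable lborel (\<lambda>x. f (t + c *\<^sub>R x)) \<longleftrightarrow> integrable lborel f"
    and integral_lborel_affine:
      "(\<integral>x. f x \<partial>lborel) = \<bar>c\<bar> ^ DIM('a) *\<^sub>R (\<integral>x. f (t + c *\<^sub>R x) \<partial>lborel)"
proof -
  let ?T = "\<lambda>x::'a. t + c *\<^sub>R x"
  have T: "?T \<in> lborel \<rightarrow>\<^sub>M borel" by simp
  have "integrable lborel f \<longleftrightarrow> integrable (distr lborel borel ?T) (\<lambda>x. \<bar>c\<bar> ^ DIM('a) *\<^sub>R f x)"
    by (subst lborel_affine[OF c, of t], subst integrable_density) auto
  also have "\<dots> \<longleftrightarrow> integrable (distr lborel borel ?T) f"
  proof
    assume "integrable (distr lborel borel ?T) (\<lambda>x. \<bar>c\<bar> ^ DIM('a) *\<^sub>R f x)"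
    then have "integrable (distr lborel borel ?T) (\<lambda>x. inverse (\<bar>c\<bar> ^ DIM('a)) *\<^sub>R (\<bar>c\<bar> ^ DIM('a) *\<^sub>R f x))"
      by (rule integrable_scaleR_right)
    then show "integrable (distr lborel borel ?T) f"
      using c by simp
  qed (rule integrable_scaleR_right)
  also have "\<dots> \<longleftrightarrow> integrable lborel (\<lambda>x. f (t + c *\<^sub>R x))"
    by (rule integrable_distr_eq[OF T]) simp
  finally show "integrable lborel (\<lambda>x. f (t + c *\<^sub>R x)) \<longleftrightarrow> integrable lborel f" ..
  have "(\<integral>x. f x \<partial>lborel) = (\<integral>x. \<bar>c\<bar> ^ DIM('a) *\<^sub>R f x \<partial>distr lborel borel ?T)"
    by (subst lborel_affine[OF c, of t], subst integral_density) auto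
  also have "\<dots> = (\<integral>x. \<bar>c\<bar> ^ DIM('a) *\<^sub>R f (t + c *\<^sub>R x) \<partial>lborel)"
    by (rule integral_distr[OF T]) simp
  finally show "(\<integral>x. f x \<partial>lborel) = \<bar>c\<bar> ^ DIM('a) *\<^sub>R (\<integral>x. f (t + c *\<^sub>R x) \<partial>lborel)"
    by simp
qed

lemma borel_measurable_cis [measurable]: "cis \<in> borel_measurable borel"
  by (intro borel_measurable_continuous_onI continuous_on_cis continuous_on_id)

section \<open>The Gaussian and its Fourier transform\<close>

definition gaussian :: "'a::euclidean_space \<Rightarrow> real" where
  "gaussian x = exp (- (norm x)\<^sup>2 / 2)"

lemma gaussian_nonneg: "0 \<le> gaussian x"
  by (simp add: gaussian_def)

lemma abs_gaussian [simp]: "\<bar>gaussian x\<bar> = gaussian x"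
  by (simp add: gaussian_def)

lemma gaussian_le_1: "gaussian x \<le> 1"
  by (simp add: gaussian_def)

lemma gaussian_0 [simp]: "gaussian 0 = 1"
  by (simp add: gaussian_def)

lemma continuous_on_gaussian: "continuous_on UNIV gaussian"
  unfolding gaussian_def by (intro continuous_intros) auto

lemma borel_measurable_gaussian [measurable]: "gaussian \<in> borel_measurable borel"
  by (rule borel_measurable_continuous_onI[OF continuous_on_gaussian])

lemma gaussian_eq_prod_Basis: "gaussian x = (\<Prod>b\<in>Basis. exp (- (x \<bullet> b)\<^sup>2 / 2))"
proof -
  have "(norm x)\<^sup>2 = (\<Sum>b\<in>Basis. (x \<bullet> b)\<^sup>2)"
    unfolding power2_norm_eq_inner by (subst euclidean_inner) (simp add: power2_eq_square)
  then show ?thesis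
    by (simp add: gaussian_def sum_negf sum_divide_distrib flip: exp_sum)
qed

lemma
  fixes s :: real
  shows integrable_gaussian_cis_real:
      "integrable lborel (\<lambda>t. complex_of_real (exp (- t\<^sup>2 / 2)) * cis (t * s))"
    and integral_gaussian_cis_real:
      "(\<integral>t. complex_of_real (exp (- t\<^sup>2 / 2)) * cis (t * s) \<partial>lborel) =
         complex_of_real (sqrt (2 * pi) * exp (- s\<^sup>2 / 2))"
proof -
  let ?f = "\<lambda>t. complex_of_real (exp (- t\<^sup>2 / 2)) * cis (t * s)"
  show "integrable lborel ?f"
  proof (rule Bochner_Integration.integrable_bound)
    show "integrable lborel (\<lambda>t. sqrt (2 * pi) * (std_normal_density t * t ^ 0))"
      using integrable_std_normal_moment[of 0] by simp
    show "AE t in lborel. norm (?f t) \<le> norm (sqrt (2 * pi) * (std_normal_density t * t ^ 0))"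
      by (simp add: std_normal_density_def norm_mult)
  qed (simp add: borel_measurable_continuous_onI continuous_intros)
  have "complex_of_real (exp (- s\<^sup>2 / 2)) = char std_normal_distribution s"
    by (simp add: char_std_normal_distribution)
  also have "\<dots> = (\<integral>t. std_normal_density t *\<^sub>R iexp (s * t) \<partial>lborel)"
    unfolding char_def by (subst integral_density) (auto simp: normal_density_nonneg)
  also have "\<dots> = (\<integral>t. complex_of_real (1 / sqrt (2 * pi)) * ?f t \<partial>lborel)"
    by (rule Bochner_Integration.integral_cong)
       (simp_all add: std_normal_density_def scaleR_conv_of_real cis_conv_exp mult_ac)
  finally show "(\<integral>t. ?f t \<partial>lborel) = complex_of_real (sqrt (2 * pi) * exp (- s\<^sup>2 / 2))"
    by (simp add: field_simps flip: of_real_mult)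
qed

lemma cis_sum: "finite A \<Longrightarrow> cis (\<Sum>i\<in>A. f i) = (\<Prod>i\<in>A. cis (f i))"
  by (simp add: cis_conv_exp of_real_sum sum_distrib_left exp_sum)

lemma gaussian_cis_eq_prod_Basis:
  "complex_of_real (gaussian x) * cis (x \<bullet> v) =
     (\<Prod>b\<in>Basis. complex_of_real (exp (- (x \<bullet> b)\<^sup>2 / 2)) * cis ((x \<bullet> b) * (v \<bullet> b)))"
  by (simp only: gaussian_eq_prod_Basis prod.distrib euclidean_inner[of x v] cis_sum[OF finite_Basis]
      of_real_prod)

lemma
  fixes v :: "'a::euclidean_space"
  shows integrable_gaussian_cis: "integrable lborel (\<lambda>x. complex_of_real (gaussian x) * cis (x \<bullet> v))"
    and integral_gaussian_cis:
      "(\<integral>x. complex_of_real (gaussian x) * cis (x \<bullet> v) \<partial>lborel) =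
         complex_of_real (sqrt (2 * pi) ^ DIM('a) * gaussian v)"
proof -
  let ?g = "\<lambda>b t. complex_of_real (exp (- t\<^sup>2 / 2)) * cis (t * (v \<bullet> b))"
  show "integrable lborel (\<lambda>x. complex_of_real (gaussian x) * cis (x \<bullet> v))"
    unfolding gaussian_cis_eq_prod_Basis
    by (rule integrable_prod_Basis[where g="?g"]) (rule integrable_gaussian_cis_real)
  have "(\<integral>x. complex_of_real (gaussian x) * cis (x \<bullet> v) \<partial>lborel) = (\<Prod>b\<in>Basis. integral\<^sup>L lborel (?g b))"
    unfolding gaussian_cis_eq_prod_Basis
    by (rule integral_prod_Basis[where g="?g"]) (rule integrable_gaussian_cis_real)
  also have "\<dots> = complex_of_real (sqrt (2 * pi) ^ DIM('a) * gaussian v)"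
    by (simp only: integral_gaussian_cis_real) (simp add: gaussian_eq_prod_Basis prod.distrib)
  finally show "(\<integral>x. complex_of_real (gaussian x) * cis (x \<bullet> v) \<partial>lborel) =
      complex_of_real (sqrt (2 * pi) ^ DIM('a) * gaussian v)" .
qed

lemma integrable_gaussian: "integrable lborel (gaussian :: 'a::euclidean_space \<Rightarrow> real)"
proof -
  have "integrable lborel (\<lambda>x::'a. Re (complex_of_real (gaussian x) * cis (x \<bullet> 0)))"
    by (rule integrable_Re[OF integrable_gaussian_cis])
  then show ?thesis
    by simp
qed

lemma integral_gaussian: "(\<integral>x. gaussian (x::'a) \<partial>lborel) = sqrt (2 * pi) ^ DIM('a::euclidean_space)"
proof -
  have "complex_of_real (\<integral>x. gaussian (x::'a) \<partial>lborel) = (\<integral>x. complex_of_real (gaussian x) * cis (x \<bullet> (0::'a)) \<partial>lborel)"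
    by simp
  also have "\<dots> = complex_of_real (sqrt (2 * pi) ^ DIM('a))"
    by (simp only: integral_gaussian_cis gaussian_0 mult_1_right)
  finally show ?thesis
    by (simp only: of_real_eq_iff)
qed

lemma
  fixes v :: "'a::euclidean_space"
  assumes \<epsilon>: "0 < \<epsilon>"
  shows integrable_gaussian_scaled: "integrable lborel (\<lambda>x::'a. gaussian (\<epsilon> *\<^sub>R x))"
    and integral_gaussian_scaled_cis:
      "(\<integral>x. complex_of_real (gaussian (\<epsilon> *\<^sub>R x)) * cis (x \<bullet> v) \<partial>lborel) =
         complex_of_real ((sqrt (2 * pi) / \<epsilon>) ^ DIM('a) * gaussian (v /\<^sub>R \<epsilon>))"
proof -
  show "integrable lborel (\<lambda>x::'a. gaussian (\<epsilon> *\<^sub>R x))"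
    using integrable_lborel_affine_iff[of \<epsilon> "gaussian :: 'a \<Rightarrow> real" 0] \<epsilon> integrable_gaussian by simp
  let ?f = "\<lambda>x. complex_of_real (gaussian (\<epsilon> *\<^sub>R x)) * cis (x \<bullet> v)"
  have "?f \<in> borel_measurable borel"
    by measurable
  then have "(\<integral>x. ?f x \<partial>lborel) = (1 / \<epsilon>) ^ DIM('a) *\<^sub>R (\<integral>x. ?f (0 + (1 / \<epsilon>) *\<^sub>R x) \<partial>lborel)"
    using \<epsilon> by (subst integral_lborel_affine[of "1 / \<epsilon>" _ 0]) auto
  also have "(\<lambda>x. ?f (0 + (1 / \<epsilon>) *\<^sub>R x)) = (\<lambda>x. complex_of_real (gaussian x) * cis (x \<bullet> (v /\<^sub>R \<epsilon>)))"
    using \<epsilon> by (auto simp: fun_eq_iff divide_inverse_commute)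
  also have "(\<integral>x. complex_of_real (gaussian x) * cis (x \<bullet> (v /\<^sub>R \<epsilon>)) \<partial>lborel) =
      complex_of_real (sqrt (2 * pi) ^ DIM('a) * gaussian (v /\<^sub>R \<epsilon>))"
    by (rule integral_gaussian_cis)
  finally show "(\<integral>x. ?f x \<partial>lborel) = complex_of_real ((sqrt (2 * pi) / \<epsilon>) ^ DIM('a) * gaussian (v /\<^sub>R \<epsilon>))"
    by (simp add: scaleR_conv_of_real power_divide)
qed

text \<open>A product weight: it is integrable coordinatewise, and its reciprocal expands into the
  monomials \<open>\<Prod>b\<in>S. (x\<cdot>b)\<^sup>2\<close> bounded in \<open>fourier_integral_monomial_bound\<close>.\<close>

definition cauchy_weight :: "'a::euclidean_space \<Rightarrow> real" where
  "cauchy_weight y = (\<Prod>b\<in>Basis. inverse (1 + (y \<bullet> b)\<^sup>2))"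

lemma cauchy_weight_pos: "0 < cauchy_weight y"
  unfolding cauchy_weight_def by (intro prod_pos) (simp add: add_pos_nonneg)

lemma integrable_cauchy_weight: "integrable lborel (cauchy_weight :: 'a::euclidean_space \<Rightarrow> real)"
proof -
  have "integrable lborel (\<lambda>t::real. inverse (1 + t\<^sup>2))"
    using integrable_inverse_1_plus_square by (simp add: set_integrable_def einterval_eq_UNIV)
  then show ?thesis
    unfolding cauchy_weight_def[abs_def] by (rule integrable_prod_Basis)
qed

lemma inverse_power_le_cauchy_weight:
  "inverse ((1 + norm y) ^ (2 * DIM('a))) \<le> cauchy_weight (y::'a::euclidean_space)"
proof -
  have "(\<Prod>b\<in>(Basis::'a set). 1 + (y \<bullet> b)\<^sup>2) \<le> (\<Prod>b\<in>(Basis::'a set). (1 + norm y)\<^sup>2)"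
  proof (rule prod_mono)
    fix b :: 'a assume "b \<in> Basis"
    then have "(y \<bullet> b)\<^sup>2 \<le> (norm y)\<^sup>2"
      using Basis_le_norm abs_le_square_iff by fastforce
    then show "0 \<le> 1 + (y \<bullet> b)\<^sup>2 \<and> 1 + (y \<bullet> b)\<^sup>2 \<le> (1 + norm y)\<^sup>2"
      by (simp add: power2_sum) (smt (verit) norm_ge_zero)
  qed
  then have "(\<Prod>b\<in>(Basis::'a set). 1 + (y \<bullet> b)\<^sup>2) \<le> (1 + norm y) ^ (2 * DIM('a))"
    by (simp add: power_mult)
  then have "inverse ((1 + norm y) ^ (2 * DIM('a))) \<le> inverse (\<Prod>b\<in>(Basis::'a set). 1 + (y \<bullet> b)\<^sup>2)"
    by (intro le_imp_inverse_le prod_pos) (auto simp: add_pos_nonneg)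
  then show ?thesis
    by (simp add: cauchy_weight_def prod_inversef[symmetric] o_def)
qed

lemma norm_le_cauchy_weight:
  fixes y :: "'a::euclidean_space"
  assumes "(1 + norm y) ^ (2 * DIM('a)) * norm z \<le> C"
  shows "norm z \<le> C * cauchy_weight y"
proof -
  have pos: "0 < (1 + norm y) ^ (2 * DIM('a))"
    by (simp add: add_pos_nonneg)
  then have "0 \<le> C"
    using assms by (metis norm_ge_zero order.trans zero_le_mult_iff less_imp_le)
  have "norm z \<le> C * inverse ((1 + norm y) ^ (2 * DIM('a)))"
    using assms pos by (simp add: field_simps)
  also have "\<dots> \<le> C * cauchy_weight y"
    using \<open>0 \<le> C\<close> by (intro mult_left_mono inverse_power_le_cauchy_weight)
  finally show ?thesis .
qed

lemma norm_le_cauchy_weight_nearby: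
  fixes y z :: "'a::euclidean_space"
  assumes "dist y z \<le> 1" and "(1 + norm z) ^ (2 * DIM('a)) * norm u \<le> C"
  shows "norm u \<le> 2 ^ (2 * DIM('a)) * C * cauchy_weight y"
proof -
  let ?N = "2 * DIM('a)"
  have "norm y \<le> norm z + 1"
    using assms(1) norm_triangle_ineq2[of y z] by (simp add: dist_norm)
  then have "1 + norm y \<le> 2 * (1 + norm z)"
    by (smt (verit) norm_ge_zero)
  then have "(1 + norm y) ^ ?N * norm u \<le> (2 * (1 + norm z)) ^ ?N * norm u"
    by (intro mult_right_mono power_mono) auto
  also have "\<dots> = 2 ^ ?N * ((1 + norm z) ^ ?N * norm u)"
    by (simp only: power_mult_distrib mult.assoc)
  also have "\<dots> \<le> 2 ^ ?N * C"
    using assms(2) by (intro mult_left_mono) simp_all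
  finally show ?thesis
    by (rule norm_le_cauchy_weight)
qed

lemma integrable_bounded_by_cauchy_weight:
  fixes g :: "'a::euclidean_space \<Rightarrow> 'b::{banach,second_countable_topology}"
  assumes "g \<in> borel_measurable borel" and "\<And>y. norm (g y) \<le> C * cauchy_weight y"
  shows "integrable lborel g"
proof (rule Bochner_Integration.integrable_bound)
  show "integrable lborel (\<lambda>y. C * cauchy_weight y)"
    using integrable_cauchy_weight by (rule integrable_mult_right)
  show "AE y in lborel. norm (g y) \<le> norm (C * cauchy_weight y)"
    using assms(2) by (auto intro: order_trans[OF _ abs_ge_self])
qed (use assms(1) in simp)

section \<open>The Fourier integral\<close>

lemma tendsto_difference_quotient:
  fixes g :: "real \<Rightarrow> 'b::real_normed_vector"
  assumes "(g has_vector_derivative D) (at 0)" and "t \<longlonglongrightarrow> 0" and "\<And>n. t n \<noteq> 0"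
  shows "(\<lambda>n. (g (t n) - g 0) /\<^sub>R t n) \<longlonglongrightarrow> D"
proof -
  have "((\<lambda>s. (g s - g 0 - s *\<^sub>R D) /\<^sub>R norm s) \<longlongrightarrow> 0) (at 0)"
    using assms(1) by (simp add: has_vector_derivative_def has_derivative_at_within)
  then have "((\<lambda>s. norm ((g s - g 0 - s *\<^sub>R D) /\<^sub>R norm s)) \<longlongrightarrow> 0) (at 0)"
    by (rule tendsto_norm_zero)
  moreover have "norm ((g s - g 0 - s *\<^sub>R D) /\<^sub>R norm s) = norm ((g s - g 0) /\<^sub>R s - D)"
    if "s \<noteq> 0" for s
  proof -
    have "(g s - g 0) /\<^sub>R s - D = (g s - g 0 - s *\<^sub>R D) /\<^sub>R s"
      using that by (simp add: scaleR_diff_right)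
    then show ?thesis
      by simp
  qed
  then have "\<forall>\<^sub>F s in at 0. norm ((g s - g 0 - s *\<^sub>R D) /\<^sub>R norm s) = norm ((g s - g 0) /\<^sub>R s - D)"
    unfolding eventually_at_filter by (intro always_eventually) auto
  ultimately have "((\<lambda>s. (g s - g 0) /\<^sub>R s) \<longlongrightarrow> D) (at 0)"
    by (subst LIM_zero_iff[symmetric], subst tendsto_norm_zero_iff[symmetric])
       (rule Lim_transform_eventually)
  moreover have "filterlim t (at 0) sequentially"
    using assms(2,3) by (auto simp: filterlim_at)
  ultimately show ?thesis
    by (rule filterlim_compose)
qed

definition fourier_integral :: "('a::euclidean_space \<Rightarrow> complex) \<Rightarrow> 'a \<Rightarrow> complex" where
  "fourier_integral f x = (\<integral>w. f w * cis (x \<bullet> w) \<partial>lborel)"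

lemma integrable_mult_cis:
  assumes "integrable M f" and [measurable]: "g \<in> borel_measurable M"
  shows "integrable M (\<lambda>x. f x * cis (g x))"
proof (rule Bochner_Integration.integrable_bound)
  show "integrable M (\<lambda>x. norm (f x))"
    using assms(1) by (rule integrable_norm)
  show "(\<lambda>x. f x * cis (g x)) \<in> borel_measurable M"
    using borel_measurable_integrable[OF assms(1)] by measurable
qed (simp add: norm_mult)

lemma borel_measurable_fourier_integral [measurable]:
  fixes f :: "'a::euclidean_space \<Rightarrow> complex"
  assumes [measurable]: "f \<in> borel_measurable borel"
  shows "fourier_integral f \<in> borel_measurable borel"
proof -
  have "(\<lambda>(x, w). f w * cis (x \<bullet> w)) \<in> borel_measurable (borel \<Otimes>\<^sub>M lborel)"
    by measurable
  then show ?thesis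
    unfolding fourier_integral_def[abs_def] by (rule lborel.borel_measurable_lebesgue_integral)
qed

lemma
  fixes f :: "'a::euclidean_space \<Rightarrow> complex"
  assumes [measurable]: "f \<in> borel_measurable borel"
    and int: "integrable lborel (\<lambda>y. f y * cis (x \<bullet> y))"
  shows integrable_translate_cis: "integrable lborel (\<lambda>y. f (c + y) * cis (x \<bullet> y))"
    and integral_translate_cis:
      "(\<integral>y. f (c + y) * cis (x \<bullet> y) \<partial>lborel) = cis (- (x \<bullet> c)) * fourier_integral f x"
proof -
  let ?g = "\<lambda>y. f y * cis (x \<bullet> y)"
  have shift: "f (c + y) * cis (x \<bullet> y) = cis (- (x \<bullet> c)) * ?g (c + 1 *\<^sub>R y)" for y
    by (simp add: inner_add_right cis_mult)
  have "integrable lborel (\<lambda>y. ?g (c + 1 *\<^sub>R y))"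
    using int by (subst integrable_lborel_affine_iff) simp_all
  then show "integrable lborel (\<lambda>y. f (c + y) * cis (x \<bullet> y))"
    unfolding shift by (rule integrable_mult_right)
  show "(\<integral>y. f (c + y) * cis (x \<bullet> y) \<partial>lborel) = cis (- (x \<bullet> c)) * fourier_integral f x"
    unfolding shift fourier_integral_def by (subst integral_lborel_affine[of 1 _ c]) simp_all
qed

lemma norm_difference_quotient_le_cauchy_weight:
  fixes f :: "'a::euclidean_space \<Rightarrow> complex"
  assumes diff: "\<And>y. f differentiable (at y)" and e: "norm e = 1"
    and D_bound: "\<And>y. (1 + norm y) ^ (2 * DIM('a)) * norm (frechet_derivative f (at y) e) \<le> C"
    and t: "0 < t" "t \<le> 1"
  shows "norm ((f (t *\<^sub>R e + y) - f y) /\<^sub>R t) \<le> 2 ^ (2 * DIM('a)) * C * cauchy_weight y"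
proof -
  define g where "g s = f (y + s *\<^sub>R e)" for s
  define g' where "g' s h = frechet_derivative f (at (y + s *\<^sub>R e)) (h *\<^sub>R e)" for s h
  have g_deriv: "(g has_derivative g' s) (at s)" for s
  proof -
    have "((\<lambda>s. y + s *\<^sub>R e) has_derivative (\<lambda>h. h *\<^sub>R e)) (at s)"
      by (auto intro!: derivative_eq_intros)
    moreover have "(f has_derivative frechet_derivative f (at (y + s *\<^sub>R e))) (at (y + s *\<^sub>R e))"
      using diff frechet_derivative_works by blast
    ultimately show ?thesis
      unfolding g_def g'_def[abs_def] by (rule has_derivative_compose)
  qed
  then have "continuous_on {0..t} g"
    by (intro continuous_at_imp_continuous_on ballI has_derivative_continuous)
  then obtain s where s: "0 < s" "s < t" and mvt: "norm (g t - g 0) \<le> norm (g' s (t - 0))"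
    using mvt_general[OF t(1), of g g'] g_deriv by auto
  define z where "z = y + s *\<^sub>R e"
  have "linear (frechet_derivative f (at z))"
    using diff frechet_derivative_works has_derivative_linear by blast
  then have "g' s (t - 0) = t *\<^sub>R frechet_derivative f (at z) e"
    unfolding g'_def z_def by (simp add: linear_cmul)
  with mvt t have diff_le: "norm (f (t *\<^sub>R e + y) - f y) \<le> t * norm (frechet_derivative f (at z) e)"
    by (simp add: g_def add.commute)
  have "dist y z \<le> 1"
    using s t e by (simp add: z_def dist_norm)
  then have D_le: "norm (frechet_derivative f (at z) e) \<le> 2 ^ (2 * DIM('a)) * C * cauchy_weight y"
    using D_bound by (rule norm_le_cauchy_weight_nearby)
  have "norm ((f (t *\<^sub>R e + y) - f y) /\<^sub>R t) = norm (f (t *\<^sub>R e + y) - f y) / t"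
    using t by (simp add: divide_inverse_commute)
  also have "\<dots> \<le> norm (frechet_derivative f (at z) e)"
    using diff_le t by (simp add: divide_le_eq mult.commute)
  finally show ?thesis
    using D_le by linarith
qed

lemma integral_difference_quotient_cis:
  fixes f :: "'a::euclidean_space \<Rightarrow> complex"
  assumes f_meas [measurable]: "f \<in> borel_measurable borel"
    and int: "integrable lborel (\<lambda>y. f y * cis (x \<bullet> y))"
  shows "(\<integral>y. (f (t *\<^sub>R e + y) - f y) /\<^sub>R t * cis (x \<bullet> y) \<partial>lborel) =
    (cis (- (t * (x \<bullet> e))) - 1) /\<^sub>R t * fourier_integral f x"
proof -
  have "(\<integral>y. (f (t *\<^sub>R e + y) - f y) /\<^sub>R t * cis (x \<bullet> y) \<partial>lborel) =
      (\<integral>y. (f (t *\<^sub>R e + y) * cis (x \<bullet> y) - f y * cis (x \<bullet> y)) /\<^sub>R t \<partial>lborel)"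
    by (intro Bochner_Integration.integral_cong) (simp_all add: algebra_simps)
  also have "\<dots> = ((\<integral>y. f (t *\<^sub>R e + y) * cis (x \<bullet> y) \<partial>lborel) - (\<integral>y. f y * cis (x \<bullet> y) \<partial>lborel)) /\<^sub>R t"
    using integrable_translate_cis[OF f_meas int, of "t *\<^sub>R e"] int by simp
  also have "\<dots> = (cis (- (t * (x \<bullet> e))) - 1) /\<^sub>R t * fourier_integral f x"
    unfolding integral_translate_cis[OF f_meas int]
    by (simp add: fourier_integral_def scaleR_conv_of_real algebra_simps)
  finally show ?thesis .
qed

lemma tendsto_difference_quotient_frechet_derivative:
  assumes "f differentiable (at y)" and "t \<longlonglongrightarrow> 0" and "\<And>n. t n \<noteq> 0"
  shows "(\<lambda>n. (f (t n *\<^sub>R e + y) - f y) /\<^sub>R t n) \<longlonglongrightarrow> frechet_derivative f (at y) e"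
proof -
  have "((\<lambda>s. s *\<^sub>R e + y) has_derivative (\<lambda>h. h *\<^sub>R e)) (at 0)"
    by (auto intro!: derivative_eq_intros)
  moreover have "(f has_derivative frechet_derivative f (at y)) (at (0 *\<^sub>R e + y))"
    using assms(1) unfolding frechet_derivative_works by simp
  ultimately have "((\<lambda>s. f (s *\<^sub>R e + y)) has_derivative (\<lambda>h. frechet_derivative f (at y) (h *\<^sub>R e))) (at 0)"
    by (rule has_derivative_compose)
  moreover have "linear (frechet_derivative f (at y))"
    using assms(1) frechet_derivative_works has_derivative_linear by blast
  ultimately have "((\<lambda>s. f (s *\<^sub>R e + y)) has_vector_derivative frechet_derivative f (at y) e) (at 0)"
    by (simp add: has_vector_derivative_def linear_cmul)
  from tendsto_difference_quotient[OF this assms(2,3)] show ?thesis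
    by simp
qed

lemma fourier_integral_frechet_derivative:
  fixes f :: "'a::euclidean_space \<Rightarrow> complex"
  assumes diff: "\<And>y. f differentiable (at y)" and e: "norm e = 1"
    and f_bound: "\<And>y. norm (f y) \<le> C1 * cauchy_weight y"
    and D_bound: "\<And>y. (1 + norm y) ^ (2 * DIM('a)) * norm (frechet_derivative f (at y) e) \<le> C2"
    and D_cont: "continuous_on UNIV (\<lambda>y. frechet_derivative f (at y) e)"
  shows "fourier_integral (\<lambda>y. frechet_derivative f (at y) e) x =
    - \<i> * complex_of_real (x \<bullet> e) * fourier_integral f x"
proof -
  define t where "t n = 1 / real (Suc n)" for n
  have t: "0 < t n" "t n \<le> 1" "t n \<noteq> 0" for n
    by (auto simp: t_def)
  have t_lim: "t \<longlonglongrightarrow> 0"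
    unfolding t_def using LIMSEQ_inverse_real_of_nat by (simp add: inverse_eq_divide)
  have f_meas [measurable]: "f \<in> borel_measurable borel"
    using diff by (intro borel_measurable_continuous_onI continuous_at_imp_continuous_on ballI
      differentiable_imp_continuous_within)
  have [measurable]: "(\<lambda>y. frechet_derivative f (at y) e) \<in> borel_measurable borel"
    using D_cont by (rule borel_measurable_continuous_onI)
  have int: "integrable lborel (\<lambda>y. f y * cis (x \<bullet> y))"
    by (rule integrable_bounded_by_cauchy_weight[where C=C1]) (auto simp: norm_mult f_bound)
  let ?Q = "\<lambda>n y. (f (t n *\<^sub>R e + y) - f y) /\<^sub>R t n * cis (x \<bullet> y)"
  have "((\<lambda>s. cis (- (s * (x \<bullet> e)))) has_vector_derivative - \<i> * complex_of_real (x \<bullet> e)) (at 0)"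
    unfolding has_vector_derivative_def
    by (rule has_derivative_eq_rhs, (rule derivative_intros)+) (simp add: fun_eq_iff scaleR_conv_of_real)
  from tendsto_mult_right[OF tendsto_difference_quotient[OF this t_lim t(3)], of "fourier_integral f x"]
  have "(\<lambda>n. \<integral>y. ?Q n y \<partial>lborel) \<longlonglongrightarrow> - \<i> * complex_of_real (x \<bullet> e) * fourier_integral f x"
    unfolding integral_difference_quotient_cis[OF f_meas int] by simp
  moreover have "(\<lambda>n. \<integral>y. ?Q n y \<partial>lborel) \<longlonglongrightarrow> fourier_integral (\<lambda>y. frechet_derivative f (at y) e) x"
    unfolding fourier_integral_def
  proof (rule integral_dominated_convergence[where w="\<lambda>y. 2 ^ (2 * DIM('a)) * C2 * cauchy_weight y"])
    show "integrable lborel (\<lambda>y. 2 ^ (2 * DIM('a)) * C2 * cauchy_weight y)"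
      using integrable_cauchy_weight by (rule integrable_mult_right)
    show "AE y in lborel. norm (?Q n y) \<le> 2 ^ (2 * DIM('a)) * C2 * cauchy_weight y" for n
      using norm_difference_quotient_le_cauchy_weight[OF diff e D_bound t(1,2)] by (simp add: norm_mult)
    show "AE y in lborel. (\<lambda>n. ?Q n y) \<longlonglongrightarrow> frechet_derivative f (at y) e * cis (x \<bullet> y)"
    proof (rule AE_I2)
      fix y
      show "(\<lambda>n. ?Q n y) \<longlonglongrightarrow> frechet_derivative f (at y) e * cis (x \<bullet> y)"
        using tendsto_mult_right[OF tendsto_difference_quotient_frechet_derivative[OF diff t_lim t(3)],
          of e y "cis (x \<bullet> y)"] by simp
    qed
  qed simp_all
  ultimately show ?thesis
    using LIMSEQ_unique by blast
qed

section \<open>Fourier integrals of Schwartz functions\<close>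

locale schwartz_function =
  fixes \<phi> :: "'a::euclidean_space \<Rightarrow> complex"
  assumes schwartz: "schwartz \<phi>"
begin

lemma differentiable_iter_pd: "set bs \<subseteq> Basis \<Longrightarrow> iter_pd bs \<phi> differentiable (at x)"
  using schwartz unfolding schwartz_def by blast

lemma continuous_on_iter_pd: "set bs \<subseteq> Basis \<Longrightarrow> continuous_on UNIV (iter_pd bs \<phi>)"
  by (intro continuous_at_imp_continuous_on ballI differentiable_imp_continuous_within
      differentiable_iter_pd)

lemma borel_measurable_iter_pd [measurable]:
  "set bs \<subseteq> Basis \<Longrightarrow> iter_pd bs \<phi> \<in> borel_measurable borel"
  by (rule borel_measurable_continuous_onI[OF continuous_on_iter_pd])

lemma iter_pd_decay: "set bs \<subseteq> Basis \<Longrightarrow> \<exists>C. \<forall>x. (1 + norm x) ^ n * norm (iter_pd bs \<phi> x) \<le> C"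
  using schwartz unfolding schwartz_def by blast

lemma iter_pd_le_cauchy_weight:
  assumes "set bs \<subseteq> Basis"
  obtains C where "\<And>x. norm (iter_pd bs \<phi> x) \<le> C * cauchy_weight x"
  using iter_pd_decay[OF assms, of "2 * DIM('a)"] norm_le_cauchy_weight by metis

lemma integrable_iter_pd_cis:
  assumes "set bs \<subseteq> Basis"
  shows "integrable lborel (\<lambda>y. iter_pd bs \<phi> y * cis (x \<bullet> y))"
proof -
  obtain C where "\<And>y. norm (iter_pd bs \<phi> y) \<le> C * cauchy_weight y"
    using iter_pd_le_cauchy_weight[OF assms] by blast
  with assms show ?thesis
    by (intro integrable_bounded_by_cauchy_weight[where C=C]) (auto simp: norm_mult)
qed

lemma fourier_integral_iter_pd:
  "set bs \<subseteq> Basis \<Longrightarrow>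
    fourier_integral (iter_pd bs \<phi>) x =
      prod_list (map (\<lambda>b. - \<i> * complex_of_real (x \<bullet> b)) bs) * fourier_integral \<phi> x"
proof (induction bs)
  case (Cons b bs)
  then have bs: "set bs \<subseteq> Basis" and b: "b \<in> Basis"
    by auto
  obtain C1 where "\<And>y. norm (iter_pd bs \<phi> y) \<le> C1 * cauchy_weight y"
    using iter_pd_le_cauchy_weight[OF bs] by blast
  moreover obtain C2 where "\<forall>y. (1 + norm y) ^ (2 * DIM('a)) * norm (iter_pd (b # bs) \<phi> y) \<le> C2"
    using iter_pd_decay[OF Cons.prems] by blast
  ultimately have "fourier_integral (iter_pd (b # bs) \<phi>) x =
      - \<i> * complex_of_real (x \<bullet> b) * fourier_integral (iter_pd bs \<phi>) x"
    using continuous_on_iter_pd[OF Cons.prems] unfolding iter_pd.simps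
    by (intro fourier_integral_frechet_derivative differentiable_iter_pd[OF bs] norm_Basis[OF b])
       auto
  then show ?case
    using Cons.IH[OF bs] by (simp add: mult_ac)
qed simp

lemma fourier_integral_monomial_bound:
  assumes "S \<subseteq> Basis"
  shows "\<exists>K. \<forall>x. (\<Prod>b\<in>S. (x \<bullet> b)\<^sup>2) * norm (fourier_integral \<phi> x) \<le> K"
proof -
  obtain l where l: "set l = S" "distinct l"
    using finite_distinct_list[OF finite_subset[OF assms finite_Basis]] by blast
  have bs: "set (l @ l) \<subseteq> Basis"
    using l assms by simp
  have "(\<Prod>b\<in>S. (x \<bullet> b)\<^sup>2) * norm (fourier_integral \<phi> x) \<le> (\<integral>y. norm (iter_pd (l @ l) \<phi> y) \<partial>lborel)"
    for x
  proof -
    let ?g = "\<lambda>b. - \<i> * complex_of_real (x \<bullet> b)"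
    have "prod_list (map ?g (l @ l)) = (prod ?g S)\<^sup>2"
      using prod.distinct_set_conv_list[OF l(2), of ?g] l by (simp add: power2_eq_square)
    also have "norm \<dots> = (\<Prod>b\<in>S. \<bar>x \<bullet> b\<bar>)\<^sup>2"
      by (simp add: norm_power prod_norm[symmetric] norm_mult)
    also have "\<dots> = (\<Prod>b\<in>S. (x \<bullet> b)\<^sup>2)"
      by (simp add: prod_power_distrib)
    finally have "(\<Prod>b\<in>S. (x \<bullet> b)\<^sup>2) * norm (fourier_integral \<phi> x) = norm (fourier_integral (iter_pd (l @ l) \<phi>) x)"
      using fourier_integral_iter_pd[OF bs, of x] by (metis norm_mult)
    also have "\<dots> \<le> (\<integral>y. norm (iter_pd (l @ l) \<phi> y * cis (x \<bullet> y)) \<partial>lborel)"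
      unfolding fourier_integral_def by (rule integral_norm_bound)
    finally show ?thesis
      by (simp add: norm_mult)
  qed
  then show ?thesis
    by blast
qed

lemma fourier_integral_le_cauchy_weight: "\<exists>K. \<forall>x. norm (fourier_integral \<phi> x) \<le> K * cauchy_weight x"
proof -
  have "\<forall>S\<in>Pow Basis. \<exists>K. \<forall>x. (\<Prod>b\<in>S. (x \<bullet> b)\<^sup>2) * norm (fourier_integral \<phi> x) \<le> K"
    using fourier_integral_monomial_bound by blast
  from bchoice[OF this] obtain K
    where K: "\<forall>S\<in>Pow Basis. \<forall>x. (\<Prod>b\<in>S. (x \<bullet> b)\<^sup>2) * norm (fourier_integral \<phi> x) \<le> K S"
    by blast
  have "norm (fourier_integral \<phi> x) \<le> (\<Sum>S\<in>Pow Basis. K S) * cauchy_weight x" for x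
  proof -
    have "inverse (cauchy_weight x) = (\<Prod>b\<in>Basis. (x \<bullet> b)\<^sup>2 + 1)"
      by (simp add: cauchy_weight_def prod_inversef[symmetric] o_def add.commute)
    also have "\<dots> = (\<Sum>S\<in>Pow Basis. \<Prod>b\<in>S. (x \<bullet> b)\<^sup>2)"
      by (simp add: prod_add)
    finally have "inverse (cauchy_weight x) * norm (fourier_integral \<phi> x) =
        (\<Sum>S\<in>Pow Basis. (\<Prod>b\<in>S. (x \<bullet> b)\<^sup>2) * norm (fourier_integral \<phi> x))"
      by (simp add: sum_distrib_right)
    also have "\<dots> \<le> (\<Sum>S\<in>Pow Basis. K S)"
      using K by (intro sum_mono) blast
    finally show ?thesis
      using cauchy_weight_pos[of x] by (simp add: field_simps)
  qed
  then show ?thesis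
    by blast
qed

lemma integrable_fourier_integral: "integrable lborel (fourier_integral \<phi>)"
proof -
  obtain K where "\<And>x. norm (fourier_integral \<phi> x) \<le> K * cauchy_weight x"
    using fourier_integral_le_cauchy_weight by blast
  then show ?thesis
    using borel_measurable_iter_pd[of "[]"] by (intro integrable_bounded_by_cauchy_weight) auto
qed

end

section \<open>Fourier inversion\<close>

lemma fourier_integral_multiplication:
  fixes \<phi> g :: "'a::euclidean_space \<Rightarrow> complex"
  assumes int_\<phi>: "integrable lborel \<phi>" and int_g: "integrable lborel g"
  shows "(\<integral>x. fourier_integral \<phi> x * g x \<partial>lborel) = (\<integral>y. \<phi> y * fourier_integral g y \<partial>lborel)"
proof -
  have [measurable]: "\<phi> \<in> borel_measurable borel" "g \<in> borel_measurable borel"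
    using borel_measurable_integrable[OF int_\<phi>] borel_measurable_integrable[OF int_g] by simp_all
  define F where "F x y = \<phi> y * cis (x \<bullet> y) * g x" for x y :: 'a
  have "integrable (lborel \<Otimes>\<^sub>M lborel) (\<lambda>(x, y). F x y)"
  proof (rule lborel_pair.Fubini_integrable)
    show "(\<lambda>(x, y). F x y) \<in> borel_measurable (lborel \<Otimes>\<^sub>M lborel)"
      unfolding F_def by measurable
    have "integrable lborel (\<lambda>x. norm (g x) * (\<integral>y. norm (\<phi> y) \<partial>lborel))"
      using integrable_norm[OF int_g] by (rule integrable_mult_left)
    then show "integrable lborel (\<lambda>x. \<integral>y. norm ((\<lambda>(x, y). F x y) (x, y)) \<partial>lborel)"
      by (simp add: F_def norm_mult mult.commute)
    show "AE x in lborel. integrable lborel (\<lambda>y. (\<lambda>(x, y). F x y) (x, y))"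
      unfolding F_def using integrable_mult_cis[OF int_\<phi>] by simp
  qed
  then have "(\<integral>x. \<integral>y. F x y \<partial>lborel \<partial>lborel) = (\<integral>y. \<integral>x. F x y \<partial>lborel \<partial>lborel)"
    by (rule lborel_pair.Fubini_integral[symmetric])
  moreover have "(\<integral>y. F x y \<partial>lborel) = fourier_integral \<phi> x * g x" for x
    unfolding F_def fourier_integral_def by (rule integral_mult_left_zero)
  moreover have "(\<integral>x. F x y \<partial>lborel) = \<phi> y * fourier_integral g y" for y
    unfolding F_def fourier_integral_def
    by (simp add: inner_commute mult_ac flip: integral_mult_right_zero)
  ultimately show ?thesis
    by simp
qed

lemma fourier_inversion_gaussian_regularized:
  fixes \<phi> :: "'a::euclidean_space \<Rightarrow> complex"
  assumes int: "integrable lborel \<phi>" and \<epsilon>: "0 < \<epsilon>"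
  shows "(\<integral>x. fourier_integral \<phi> x * cis (- (w \<bullet> x)) * complex_of_real (gaussian (\<epsilon> *\<^sub>R x)) \<partial>lborel) =
    complex_of_real (sqrt (2 * pi) ^ DIM('a)) * (\<integral>z. \<phi> (w + \<epsilon> *\<^sub>R z) * complex_of_real (gaussian z) \<partial>lborel)"
proof -
  let ?d = "DIM('a)"
  have [measurable]: "\<phi> \<in> borel_measurable borel"
    using borel_measurable_integrable[OF int] by simp
  let ?K = "complex_of_real ((sqrt (2 * pi) / \<epsilon>) ^ ?d)"
  let ?g = "\<lambda>x. complex_of_real (gaussian (\<epsilon> *\<^sub>R x)) * cis (- (w \<bullet> x))"
  have ghat: "fourier_integral ?g y = ?K * complex_of_real (gaussian ((y - w) /\<^sub>R \<epsilon>))" for y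
  proof -
    have "fourier_integral ?g y = (\<integral>x. complex_of_real (gaussian (\<epsilon> *\<^sub>R x)) * cis (x \<bullet> (y - w)) \<partial>lborel)"
      unfolding fourier_integral_def
      by (intro Bochner_Integration.integral_cong refl)
         (simp add: mult.assoc cis_mult inner_diff_right inner_commute)
    then show ?thesis
      by (simp only: integral_gaussian_scaled_cis[OF \<epsilon>] of_real_mult)
  qed
  have "integrable lborel ?g"
    using integrable_gaussian_scaled[OF \<epsilon>] by (intro integrable_mult_cis integrable_of_real) simp_all
  then have "(\<integral>x. fourier_integral \<phi> x * ?g x \<partial>lborel) = (\<integral>y. \<phi> y * fourier_integral ?g y \<partial>lborel)"
    by (rule fourier_integral_multiplication[OF int])
  then have "(\<integral>x. fourier_integral \<phi> x * cis (- (w \<bullet> x)) * complex_of_real (gaussian (\<epsilon> *\<^sub>R x)) \<partial>lborel) =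
      (\<integral>y. \<phi> y * fourier_integral ?g y \<partial>lborel)"
    by (simp only: ac_simps)
  also have "\<dots> = (\<integral>y. \<phi> y * (?K * complex_of_real (gaussian ((y - w) /\<^sub>R \<epsilon>))) \<partial>lborel)"
    by (simp only: ghat)
  also have "\<dots> =
      \<bar>\<epsilon>\<bar> ^ ?d *\<^sub>R (\<integral>z. \<phi> (w + \<epsilon> *\<^sub>R z) * (?K * complex_of_real (gaussian (((w + \<epsilon> *\<^sub>R z) - w) /\<^sub>R \<epsilon>))) \<partial>lborel)"
    using \<epsilon> by (intro integral_lborel_affine) auto
  also have "\<dots> = \<bar>\<epsilon>\<bar> ^ ?d *\<^sub>R (\<integral>z. ?K * (\<phi> (w + \<epsilon> *\<^sub>R z) * complex_of_real (gaussian z)) \<partial>lborel)"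
    using \<epsilon> by (intro arg_cong[where f="scaleR _"] Bochner_Integration.integral_cong refl)
       (simp add: mult.left_commute)
  also have "\<dots> = \<bar>\<epsilon>\<bar> ^ ?d *\<^sub>R (?K * (\<integral>z. \<phi> (w + \<epsilon> *\<^sub>R z) * complex_of_real (gaussian z) \<partial>lborel))"
    by (simp only: integral_mult_right_zero)
  also have "\<dots> = complex_of_real (sqrt (2 * pi) ^ ?d) * (\<integral>z. \<phi> (w + \<epsilon> *\<^sub>R z) * complex_of_real (gaussian z) \<partial>lborel)"
    using \<epsilon> by (simp add: scaleR_conv_of_real power_divide)
  finally show ?thesis .
qed

lemma tendsto_integral_mult_gaussian_scaled:
  fixes h :: "'a::euclidean_space \<Rightarrow> complex"
  assumes int: "integrable lborel h" and \<epsilon>: "\<epsilon> \<longlonglongrightarrow> 0"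
  shows "(\<lambda>n. \<integral>x. h x * complex_of_real (gaussian (\<epsilon> n *\<^sub>R x)) \<partial>lborel) \<longlonglongrightarrow> (\<integral>x. h x \<partial>lborel)"
proof (rule integral_dominated_convergence[where w="\<lambda>x. norm (h x)"])
  have [measurable]: "h \<in> borel_measurable borel"
    using borel_measurable_integrable[OF int] by simp
  show "(\<lambda>x. h x * complex_of_real (gaussian (\<epsilon> n *\<^sub>R x))) \<in> borel_measurable lborel" for n
    by measurable
  show "integrable lborel (\<lambda>x. norm (h x))"
    using int by (rule integrable_norm)
  show "AE x in lborel. (\<lambda>n. h x * complex_of_real (gaussian (\<epsilon> n *\<^sub>R x))) \<longlonglongrightarrow> h x"
  proof (rule AE_I2)
    fix x :: 'a
    have "isCont gaussian (0::'a)"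
      using continuous_on_gaussian[where 'a='a] by (simp add: continuous_on_eq_continuous_at)
    moreover have "(\<lambda>n. \<epsilon> n *\<^sub>R x) \<longlonglongrightarrow> 0"
      using tendsto_scaleR[OF \<epsilon> tendsto_const, of x] by simp
    ultimately have "(\<lambda>n. gaussian (\<epsilon> n *\<^sub>R x)) \<longlonglongrightarrow> 1"
      using isCont_tendsto_compose by fastforce
    from tendsto_mult_left[OF tendsto_of_real[OF this], of "h x"]
    show "(\<lambda>n. h x * complex_of_real (gaussian (\<epsilon> n *\<^sub>R x))) \<longlonglongrightarrow> h x"
      by simp
  qed
  show "AE x in lborel. norm (h x * complex_of_real (gaussian (\<epsilon> n *\<^sub>R x))) \<le> norm (h x)" for n
    using gaussian_le_1 by (auto intro!: AE_I2 mult_left_le simp: norm_mult gaussian_nonneg)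
qed (use int in simp)

lemma tendsto_integral_translate_gaussian:
  fixes \<phi> :: "'a::euclidean_space \<Rightarrow> complex"
  assumes cont: "continuous_on UNIV \<phi>" and bounded: "\<And>x. norm (\<phi> x) \<le> M" and \<epsilon>: "\<epsilon> \<longlonglongrightarrow> 0"
  shows "(\<lambda>n. \<integral>z. \<phi> (w + \<epsilon> n *\<^sub>R z) * complex_of_real (gaussian z) \<partial>lborel)
    \<longlonglongrightarrow> complex_of_real (sqrt (2 * pi) ^ DIM('a)) * \<phi> w"
proof -
  have [measurable]: "\<phi> \<in> borel_measurable borel"
    using cont by (rule borel_measurable_continuous_onI)
  have "(\<lambda>n. \<integral>z. \<phi> (w + \<epsilon> n *\<^sub>R z) * complex_of_real (gaussian z) \<partial>lborel)
      \<longlonglongrightarrow> (\<integral>z. \<phi> w * complex_of_real (gaussian (z::'a)) \<partial>lborel)"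
  proof (rule integral_dominated_convergence[where w="\<lambda>z. M * gaussian z"])
    show "integrable lborel (\<lambda>z::'a. M * gaussian z)"
      using integrable_gaussian by (rule integrable_mult_right)
    have "(\<lambda>n. w + \<epsilon> n *\<^sub>R z) \<longlonglongrightarrow> w" for z
      using tendsto_add[OF tendsto_const tendsto_scaleR[OF \<epsilon> tendsto_const], of w z] by simp
    then show "AE z in lborel. (\<lambda>n. \<phi> (w + \<epsilon> n *\<^sub>R z) * complex_of_real (gaussian z))
        \<longlonglongrightarrow> \<phi> w * complex_of_real (gaussian z)"
      using continuous_on_tendsto_compose[OF cont] by (auto intro!: AE_I2 tendsto_mult_right)
    show "AE z in lborel. norm (\<phi> (w + \<epsilon> n *\<^sub>R z) * complex_of_real (gaussian z)) \<le> M * gaussian z" for n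
      using bounded by (auto intro!: AE_I2 mult_right_mono gaussian_nonneg simp: norm_mult)
  qed simp_all
  then show ?thesis
    by (simp only: integral_mult_right_zero integral_complex_of_real integral_gaussian mult.commute)
qed

lemma fourier_inversion:
  fixes \<phi> :: "'a::euclidean_space \<Rightarrow> complex"
  assumes cont: "continuous_on UNIV \<phi>" and bounded: "\<And>x. norm (\<phi> x) \<le> M"
    and int: "integrable lborel \<phi>" and int_fourier: "integrable lborel (fourier_integral \<phi>)"
  shows "(\<integral>x. fourier_integral \<phi> x * cis (- (w \<bullet> x)) \<partial>lborel) = complex_of_real ((2 * pi) ^ DIM('a)) * \<phi> w"
proof -
  let ?c = "complex_of_real (sqrt (2 * pi) ^ DIM('a))"
  define \<epsilon> where "\<epsilon> n = 1 / real (Suc n)" for n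
  have \<epsilon>: "0 < \<epsilon> n" for n
    by (simp add: \<epsilon>_def)
  have \<epsilon>_lim: "\<epsilon> \<longlonglongrightarrow> 0"
    unfolding \<epsilon>_def using LIMSEQ_inverse_real_of_nat by (simp add: inverse_eq_divide)
  have "integrable lborel (\<lambda>x. fourier_integral \<phi> x * cis (- (w \<bullet> x)))"
    using int_fourier by (rule integrable_mult_cis) simp
  from tendsto_integral_mult_gaussian_scaled[OF this \<epsilon>_lim]
  have "(\<lambda>n. ?c * (\<integral>z. \<phi> (w + \<epsilon> n *\<^sub>R z) * complex_of_real (gaussian z) \<partial>lborel))
      \<longlonglongrightarrow> (\<integral>x. fourier_integral \<phi> x * cis (- (w \<bullet> x)) \<partial>lborel)"
    by (simp only: fourier_inversion_gaussian_regularized[OF int \<epsilon>])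
  moreover have "(\<lambda>n. ?c * (\<integral>z. \<phi> (w + \<epsilon> n *\<^sub>R z) * complex_of_real (gaussian z) \<partial>lborel))
      \<longlonglongrightarrow> ?c * (?c * \<phi> w)"
    by (intro tendsto_mult_left tendsto_integral_translate_gaussian[OF cont bounded \<epsilon>_lim])
  ultimately have "(\<integral>x. fourier_integral \<phi> x * cis (- (w \<bullet> x)) \<partial>lborel) = ?c * (?c * \<phi> w)"
    by (rule LIMSEQ_unique)
  also have "\<dots> = complex_of_real ((2 * pi) ^ DIM('a)) * \<phi> w"
  proof -
    have "sqrt (2 * pi) ^ DIM('a) * sqrt (2 * pi) ^ DIM('a) = (sqrt (2 * pi) * sqrt (2 * pi)) ^ DIM('a)"
      by (rule power_mult_distrib[symmetric])
    then have "sqrt (2 * pi) ^ DIM('a) * sqrt (2 * pi) ^ DIM('a) = (2 * pi) ^ DIM('a)"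
      by simp
    then show ?thesis
      by (simp only: mult.assoc[symmetric] of_real_mult[symmetric])
  qed
  finally show ?thesis .
qed

context schwartz_function
begin

lemma fourier_inversion_schwartz:
  "(\<integral>x. fourier_integral \<phi> x * cis (- (w \<bullet> x)) \<partial>lborel) = complex_of_real ((2 * pi) ^ DIM('a)) * \<phi> w"
proof -
  obtain M where "\<forall>x. (1 + norm x) ^ 0 * norm (\<phi> x) \<le> M"
    using iter_pd_decay[of "[]" 0] by auto
  moreover have "continuous_on UNIV \<phi>"
    using continuous_on_iter_pd[of "[]"] by simp
  moreover have "integrable lborel \<phi>"
    using integrable_iter_pd_cis[of "[]" 0] by simp
  ultimately show ?thesis
    using integrable_fourier_integral by (intro fourier_inversion[where M=M]) simp_all
qed

lemma integral_fourier_integral_one_minus_cos: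
  "(\<integral>x. fourier_integral \<phi> x * complex_of_real (1 - cos (w \<bullet> x)) \<partial>lborel) =
    complex_of_real ((2 * pi) ^ DIM('a)) * (\<phi> 0 - (\<phi> w + \<phi> (- w)) / 2)"
proof -
  let ?A = "\<lambda>v x. fourier_integral \<phi> x * cis (- (v \<bullet> x))"
  have A_int: "integrable lborel (?A v)" for v
    using integrable_mult_cis[OF integrable_fourier_integral] by simp
  have "fourier_integral \<phi> x * complex_of_real (1 - cos (w \<bullet> x)) = ?A 0 x - (?A w x + ?A (- w) x) / 2" for x
  proof -
    have "complex_of_real (cos (w \<bullet> x)) = (cis (- (w \<bullet> x)) + cis (w \<bullet> x)) / 2"
      by (simp add: complex_eq_iff)
    then show ?thesis
      by (simp only: of_real_diff of_real_1) (simp add: algebra_simps)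
  qed
  then have "(\<integral>x. fourier_integral \<phi> x * complex_of_real (1 - cos (w \<bullet> x)) \<partial>lborel) =
      (\<integral>x. ?A 0 x \<partial>lborel) - ((\<integral>x. ?A w x \<partial>lborel) + (\<integral>x. ?A (- w) x \<partial>lborel)) / 2"
    using A_int[of 0] A_int[of w] A_int[of "- w"] by simp
  also have "\<dots> = complex_of_real ((2 * pi) ^ DIM('a)) * \<phi> 0 -
      (complex_of_real ((2 * pi) ^ DIM('a)) * \<phi> w + complex_of_real ((2 * pi) ^ DIM('a)) * \<phi> (- w)) / 2"
    by (simp only: fourier_inversion_schwartz)
  finally show ?thesis
    by (simp add: field_simps)
qed

end

lemma integral_cis_tent:
  fixes a :: real
  assumes a: "0 \<le> a"
  shows "(\<integral>k. cis (- k) * complex_of_real (max 0 (a - \<bar>k\<bar>)) \<partial>lborel) = 2 - 2 * complex_of_real (cos a)"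
proof -
  let ?f = "\<lambda>k. cis (- k) * complex_of_real (max 0 (a - \<bar>k\<bar>))"
  define F where "F k = cis (- k) * (\<i> * complex_of_real (a - k) - 1)" for k
  define G where "G k = cis (- k) * (\<i> * complex_of_real (a + k) + 1)" for k
  have F_deriv: "(F has_vector_derivative cis (- k) * complex_of_real (a - k)) (at k within S)" for k S
    unfolding has_vector_derivative_def F_def
    by (rule has_derivative_eq_rhs, (rule derivative_intros)+)
       (simp add: fun_eq_iff algebra_simps scaleR_conv_of_real)
  have G_deriv: "(G has_vector_derivative cis (- k) * complex_of_real (a + k)) (at k within S)" for k S
    unfolding has_vector_derivative_def G_def
    by (rule has_derivative_eq_rhs, (rule derivative_intros)+)
       (simp add: fun_eq_iff algebra_simps scaleR_conv_of_real)
  have "((\<lambda>k. cis (- k) * complex_of_real (a - k)) has_integral (F a - F 0)) {0..a}"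
    by (rule fundamental_theorem_of_calculus[OF a]) (use F_deriv in blast)
  then have right: "(?f has_integral (F a - F 0)) {0..a}"
    by (rule has_integral_eq[rotated]) (auto simp: max_def)
  have "((\<lambda>k. cis (- k) * complex_of_real (a + k)) has_integral (G 0 - G (- a))) {- a..0}"
    using a by (intro fundamental_theorem_of_calculus) (use G_deriv in auto)
  then have left: "(?f has_integral (G 0 - G (- a))) {- a..0}"
    by (rule has_integral_eq[rotated]) (auto simp: max_def)
  have "(G 0 - G (- a)) + (F a - F 0) = 2 - 2 * complex_of_real (cos a)"
    by (simp add: F_def G_def cis.code complex_eq_iff algebra_simps)
  then have "(?f has_integral (2 - 2 * complex_of_real (cos a))) {- a..a}"
    using has_integral_combine[OF _ _ left right] a by simp
  then have "(?f has_integral (2 - 2 * complex_of_real (cos a))) UNIV"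
    by (rule has_integral_on_superset) (auto simp: max_def)
  moreover have "integrable lborel ?f"
  proof -
    have "integrable lborel (\<lambda>k. indicator {- a..a} k *\<^sub>R ?f k)"
      by (rule borel_integrable_compact) (auto intro!: continuous_intros)
    also have "(\<lambda>k. indicator {- a..a} k *\<^sub>R ?f k) = ?f"
      by (auto simp: fun_eq_iff indicator_def max_def)
    finally show ?thesis .
  qed
  ultimately show ?thesis
    using has_integral_integral_lborel has_integral_unique by blast
qed

theorem mainTheorem6:
  fixes \<phi> :: "'a::euclidean_space \<Rightarrow> complex" and w :: 'a
  assumes "schwartz_even \<phi>"
  defines "h_e \<equiv> (\<lambda>x. - (1/2) * inv_fourier \<phi> x)"
  shows "\<phi> w - \<phi> 0 =
    integral\<^sup>L lborel (\<lambda>x. h_e x *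
       integral\<^sup>L lborel (\<lambda>k::real. cis (- k) *
          complex_of_real (max 0 (\<bar>w \<bullet> x\<bar> - \<bar>k\<bar>))))"
proof -
  have "schwartz \<phi>" and even: "\<phi> (- w) = \<phi> w"
    using assms(1) unfolding schwartz_even_def by auto
  then interpret schwartz_function \<phi>
    by unfold_locales
  define c where "c = (2 * pi) powi (- int DIM('a))"
  have c: "c * (2 * pi) ^ DIM('a) = 1"
    unfolding c_def power_int_minus power_int_of_nat by (simp add: field_simps)
  have "h_e x * (\<integral>k. cis (- k) * complex_of_real (max 0 (\<bar>w \<bullet> x\<bar> - \<bar>k\<bar>)) \<partial>lborel) =
      - complex_of_real c * (fourier_integral \<phi> x * complex_of_real (1 - cos (w \<bullet> x)))" for x
  proof -
    have "inv_fourier \<phi> x = complex_of_real c * fourier_integral \<phi> x"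
      unfolding inv_fourier_def fourier_integral_def c_def ..
    then show ?thesis
      unfolding integral_cis_tent[OF abs_ge_zero] h_e_def by (simp add: algebra_simps)
  qed
  then have "(\<integral>x. h_e x * (\<integral>k. cis (- k) * complex_of_real (max 0 (\<bar>w \<bullet> x\<bar> - \<bar>k\<bar>)) \<partial>lborel) \<partial>lborel) =
      - complex_of_real c * (\<integral>x. fourier_integral \<phi> x * complex_of_real (1 - cos (w \<bullet> x)) \<partial>lborel)"
    by (simp only: integral_mult_right_zero)
  also have "\<dots> = - complex_of_real (c * (2 * pi) ^ DIM('a)) * (\<phi> 0 - (\<phi> w + \<phi> (- w)) / 2)"
    by (simp only: integral_fourier_integral_one_minus_cos of_real_mult mult.assoc mult_minus_left)
  finally show ?thesis
    unfolding c even by (simp add: field_simps)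
qed

end
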